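(* There exist absolute constants $n_0,c>0$ such that for $n\ge n_0$ and $\mu\ge8\sqrt{\log n}$, there exist $\theta^\star_1,\dots,\theta^\star_n\in[-\mu,\mu]$ such that, with $\theta$ a uniformly random permutation of $\theta^\star$, $X\mid\theta\sim\mathcal N(\theta,I_n)$, $\widehat\theta^{\rm S}_i=\mathbb{E}[\theta_i\mid X_i]$ and $\widehat\theta^{\rm PI}_i=\mathbb{E}[\theta_i\mid X]$, $$\mathbb{E}\big[\|\widehat\theta^{\rm S}-\widehat\theta^{\rm PI}\|_2^2\big]\ge c\min\Big\{\frac{\mu}{\sqrt{\log n}},\;n\Big\}.$$
   Context: A uniformly random permutation of $\theta^\star$ means $\theta=(\theta^\star_{\pi(1)},\dots,\theta^\star_{\pi(n)})$ with $\pi$ uniform over permutations of $[n]$. *)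

theory Defs
  imports "HOL-Probability.Probability" "HOL-Probability.Conditional_Expectation"
begin

text \<open>Sample space: pairs (pi, x) with pi a permutation of {..<n} and x in R^n
  (extensional functions on {..<n}).  theta = theta_star o pi, and given pi,
  x has density prod_k N(theta_star (pi k), 1).  pi is uniform over the n! permutations.\<close>

definition perms :: "nat \<Rightarrow> (nat \<Rightarrow> nat) set" where
  "perms n = {p. p permutes {..<n}}"

definition perm_gauss_model :: "nat \<Rightarrow> (nat \<Rightarrow> real) \<Rightarrow> ((nat \<Rightarrow> nat) \<times> (nat \<Rightarrow> real)) measure" where
  "perm_gauss_model n ts =
     density (count_space (perms n) \<Otimes>\<^sub>M PiM {..<n} (\<lambda>_. lborel))
       (\<lambda>(p, x). ennreal ((1 / fact n) * (\<Prod>k<n. normal_density (ts (p k)) 1 (x k))))"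

definition theta_rv :: "(nat \<Rightarrow> real) \<Rightarrow> nat \<Rightarrow> (nat \<Rightarrow> nat) \<times> (nat \<Rightarrow> real) \<Rightarrow> real" where
  "theta_rv ts i \<omega> = ts (fst \<omega> i)"

definition sigma_Xi :: "nat \<Rightarrow> (nat \<Rightarrow> real) \<Rightarrow> nat \<Rightarrow> ((nat \<Rightarrow> nat) \<times> (nat \<Rightarrow> real)) measure" where
  "sigma_Xi n ts i = vimage_algebra (space (perm_gauss_model n ts)) (\<lambda>\<omega>. snd \<omega> i) borel"

definition sigma_X :: "nat \<Rightarrow> (nat \<Rightarrow> real) \<Rightarrow> ((nat \<Rightarrow> nat) \<times> (nat \<Rightarrow> real)) measure" where
  "sigma_X n ts = vimage_algebra (space (perm_gauss_model n ts)) snd (PiM {..<n} (\<lambda>_. borel))"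

definition theta_S :: "nat \<Rightarrow> (nat \<Rightarrow> real) \<Rightarrow> nat \<Rightarrow> (nat \<Rightarrow> nat) \<times> (nat \<Rightarrow> real) \<Rightarrow> real" where
  "theta_S n ts i = real_cond_exp (perm_gauss_model n ts) (sigma_Xi n ts i) (theta_rv ts i)"

definition theta_PI :: "nat \<Rightarrow> (nat \<Rightarrow> real) \<Rightarrow> nat \<Rightarrow> (nat \<Rightarrow> nat) \<times> (nat \<Rightarrow> real) \<Rightarrow> real" where
  "theta_PI n ts i = real_cond_exp (perm_gauss_model n ts) (sigma_X n ts) (theta_rv ts i)"

definition S_PI_gap :: "nat \<Rightarrow> (nat \<Rightarrow> real) \<Rightarrow> real" where
  "S_PI_gap n ts = integral\<^sup>L (perm_gauss_model n ts)
     (\<lambda>\<omega>. \<Sum>i<n. (theta_S n ts i \<omega> - theta_PI n ts i \<omega>)\<^sup>2)"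

end

theory Submission
  imports Defs
begin

text \<open>
  The hard instance consists of \<open>m \<approx> min (\<mu> / sqrt (log n)) n\<close> pairs of values \<open>c\<^sub>k \<plusminus> 4\<close> whose
  centers are about \<open>6 sqrt (log n)\<close> apart. A rule that sees only \<open>X\<^sub>i\<close> cannot tell the two members
  of a pair apart: swapping them does not change the law of the random permutation, and no function of
  \<open>X\<^sub>i\<close> is accurate for two unit Gaussians with means 8 apart, so \<open>E \<parallel>\<theta> - \<theta>\<^sup>S\<parallel>\<^sup>2 \<ge> c m\<close>.
  A rule that sees all of \<open>X\<close> finds the partner of \<open>X\<^sub>i\<close> as the only other observation in its
  window and reports \<open>c\<^sub>k \<plusminus> 4\<close> according to which of the two is larger. It fails only when two
  noises differ by 8, with probability \<open>e^-16\<close> per pair, or when one of the \<open>n\<close> noises leaves its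
  window, which is polynomially unlikely since the margin is \<open>3 sqrt (log n)\<close>. As \<open>\<theta>\<^sup>P\<^sup>I\<close> is the
  \<open>L\<^sup>2\<close>-projection onto \<open>\<sigma>(X)\<close>, which contains \<open>\<theta>\<^sup>S\<close>, Pythagoras bounds
  \<open>E \<parallel>\<theta>\<^sup>S - \<theta>\<^sup>P\<^sup>I\<parallel>\<^sup>2\<close> from below by the difference of the two risks.
\<close>

section \<open>Gaussian integrals\<close>

abbreviation gauss :: "real \<Rightarrow> real \<Rightarrow> real" where
  "gauss a t \<equiv> normal_density a 1 t"

abbreviation prod_gauss :: "nat \<Rightarrow> (nat \<Rightarrow> real) \<Rightarrow> (nat \<Rightarrow> real) \<Rightarrow> ennreal" where
  "prod_gauss n a x \<equiv> \<Prod>k<n. ennreal (gauss (a k) (x k))"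

lemma borel_measurable_gauss[measurable]: "gauss a \<in> borel_measurable borel"
  unfolding normal_density_def by measurable

lemma nn_integral_gauss: "(\<integral>\<^sup>+ t. ennreal (gauss a t) \<partial>lborel) = 1"
  by (subst nn_integral_eq_integral) auto

lemma gauss_mult_exp: "gauss a t * exp (l * (t - a)) = exp (l^2/2) * gauss (a + l) t"
proof -
  have "exp (-(t - a)\<^sup>2 / (2 * 1\<^sup>2)) * exp (l * (t - a)) = exp (l^2/2) * exp (-(t - (a + l))\<^sup>2 / (2 * 1\<^sup>2))"
    unfolding exp_add[symmetric] by (rule arg_cong[where f=exp]) (simp add: power2_eq_square field_simps)
  then show ?thesis unfolding normal_density_def by (simp add: algebra_simps)
qed

lemma nn_integral_gauss_exp:
  assumes "C \<ge> 0"
  shows "(\<integral>\<^sup>+ t. ennreal (gauss a t) * ennreal (C * exp (l * (t - a))) \<partial>lborel) = ennreal (C * exp (l^2/2))"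
proof -
  have "(\<integral>\<^sup>+ t. ennreal (gauss a t) * ennreal (C * exp (l * (t - a))) \<partial>lborel)
     = (\<integral>\<^sup>+ t. ennreal (C * exp (l^2/2)) * ennreal (gauss (a + l) t) \<partial>lborel)"
    using assms by (intro nn_integral_cong)
      (simp add: ennreal_mult[symmetric] mult.left_commute gauss_mult_exp)
  also have "\<dots> = ennreal (C * exp (l^2/2))"
    by (subst nn_integral_cmult) (auto simp: nn_integral_gauss)
  finally show ?thesis .
qed

lemma nn_integral_gauss_exp_abs_le:
  assumes "C \<ge> 0"
  shows "(\<integral>\<^sup>+ t. ennreal (gauss a t) * ennreal (C * exp (l * \<bar>t - a\<bar>)) \<partial>lborel) \<le> ennreal (2 * C * exp (l^2/2))"
proof -
  have "(\<integral>\<^sup>+ t. ennreal (gauss a t) * ennreal (C * exp (l * \<bar>t - a\<bar>)) \<partial>lborel)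
    \<le> (\<integral>\<^sup>+ t. ennreal (gauss a t) * ennreal (C * exp (l * (t - a)))
            + ennreal (gauss a t) * ennreal (C * exp ((-l) * (t - a))) \<partial>lborel)"
  proof (intro nn_integral_mono)
    fix t
    have "l * \<bar>t - a\<bar> = l * (t - a) \<or> l * \<bar>t - a\<bar> = (-l) * (t - a)"
      by (cases "t \<ge> a") (simp_all add: algebra_simps)
    then have "exp (l * \<bar>t - a\<bar>) \<le> exp (l * (t - a)) + exp ((-l) * (t - a))"
      by (auto simp: add_increasing add_increasing2)
    then have "C * exp (l * \<bar>t - a\<bar>) \<le> C * exp (l * (t - a)) + C * exp ((-l) * (t - a))"
      using assms by (simp add: distrib_left[symmetric] mult_left_mono)
    then show "ennreal (gauss a t) * ennreal (C * exp (l * \<bar>t - a\<bar>))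
        \<le> ennreal (gauss a t) * ennreal (C * exp (l * (t - a))) + ennreal (gauss a t) * ennreal (C * exp ((-l) * (t - a)))"
      using assms by (simp add: distrib_left[symmetric] mult_left_mono ennreal_plus[symmetric] ennreal_leI del: ennreal_plus)
  qed
  also have "\<dots> = ennreal (C * exp (l^2/2)) + ennreal (C * exp ((-l)^2/2))"
    using assms nn_integral_gauss_exp[of C a "-l"] by (subst nn_integral_add) (auto simp: nn_integral_gauss_exp)
  also have "\<dots> = ennreal (2 * C * exp (l^2/2))"
    using assms by (simp add: ennreal_plus[symmetric] del: ennreal_plus)
  finally show ?thesis .
qed

lemma gauss_ge_of_dist_le:
  assumes "\<bar>t - a\<bar> \<le> d"
  shows "gauss 0 d \<le> gauss a t"
proof -
  have "(t - a)^2 \<le> d^2" using assms by (metis abs_ge_zero order_trans power2_abs power_mono)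
  then show ?thesis unfolding normal_density_def by (simp add: divide_right_mono)
qed

lemma nn_integral_PiM_prod_gauss:
  assumes [measurable]: "\<And>k. k \<in> J \<Longrightarrow> u k \<in> borel_measurable borel" and J: "J \<subseteq> {..<n}"
  shows "(\<integral>\<^sup>+ x. prod_gauss n a x * (\<Prod>k\<in>J. u k (x k)) \<partial>PiM {..<n} (\<lambda>_. lborel))
     = (\<Prod>k\<in>J. \<integral>\<^sup>+ t. ennreal (gauss (a k) t) * u k t \<partial>lborel)"
proof -
  interpret product_sigma_finite "\<lambda>_::nat. (lborel::real measure)"
    by (simp add: product_sigma_finite_def sigma_finite_lborel)
  define h where "h k = (if k \<in> J then u k else (\<lambda>_. 1))" for k
  have [measurable]: "h k \<in> borel_measurable borel" for k by (simp add: h_def)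
  have J_eq: "{..<n} \<inter> J = J" using J by blast
  have "(\<integral>\<^sup>+ x. prod_gauss n a x * (\<Prod>k\<in>J. u k (x k)) \<partial>PiM {..<n} (\<lambda>_. lborel))
      = (\<integral>\<^sup>+ x. (\<Prod>k<n. ennreal (gauss (a k) (x k)) * h k (x k)) \<partial>PiM {..<n} (\<lambda>_. lborel))"
  proof (intro nn_integral_cong)
    fix x
    have "(\<Prod>k<n. h k (x k)) = (\<Prod>k\<in>J. u k (x k))"
      by (simp add: h_def if_distrib[of "\<lambda>f. f _"] prod.inter_restrict[symmetric] J_eq cong: if_cong)
    then show "prod_gauss n a x * (\<Prod>k\<in>J. u k (x k)) = (\<Prod>k<n. ennreal (gauss (a k) (x k)) * h k (x k))"
      by (simp add: prod.distrib)
  qed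
  also have "\<dots> = (\<Prod>k<n. \<integral>\<^sup>+ t. ennreal (gauss (a k) t) * h k t \<partial>lborel)"
    by (rule product_nn_integral_prod) auto
  also have "\<dots> = (\<Prod>k\<in>J. \<integral>\<^sup>+ t. ennreal (gauss (a k) t) * u k t \<partial>lborel)"
  proof -
    have "(\<integral>\<^sup>+ t. ennreal (gauss (a k) t) * h k t \<partial>lborel)
        = (if k \<in> J then \<integral>\<^sup>+ t. ennreal (gauss (a k) t) * u k t \<partial>lborel else 1)" for k
      by (simp add: h_def nn_integral_gauss)
    then show ?thesis by (simp add: prod.inter_restrict[symmetric] J_eq)
  qed
  finally show ?thesis .
qed

lemma nn_integral_PiM_prod_gauss_single:
  assumes "i < n" and [measurable]: "u \<in> borel_measurable borel"
  shows "(\<integral>\<^sup>+ x. prod_gauss n a x * u (x i) \<partial>PiM {..<n} (\<lambda>_. lborel))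
    = (\<integral>\<^sup>+ t. ennreal (gauss (a i) t) * u t \<partial>lborel)"
  using nn_integral_PiM_prod_gauss[of "{i}" "\<lambda>_. u" n a] assms by simp

lemma nn_integral_PiM_prod_gauss_pair:
  assumes "i < n" "j < n" "i \<noteq> j"
    and [measurable]: "u \<in> borel_measurable borel" "v \<in> borel_measurable borel"
  shows "(\<integral>\<^sup>+ x. prod_gauss n a x * (u (x i) * v (x j)) \<partial>PiM {..<n} (\<lambda>_. lborel))
    = (\<integral>\<^sup>+ t. ennreal (gauss (a i) t) * u t \<partial>lborel) * (\<integral>\<^sup>+ t. ennreal (gauss (a j) t) * v t \<partial>lborel)"
  using nn_integral_PiM_prod_gauss[of "{i, j}" "\<lambda>k. if k = i then u else v" n a] assms
  by (simp cong: if_cong)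

lemma affine_sq_le_exp:
  fixes u :: real
  assumes "0 \<le> u"
  shows "(2 * u + 8)^2 \<le> 64 * exp (2 * u)"
proof -
  have "2 * u + 8 \<le> 8 * exp u"
    using assms exp_ge_add_one_self[of u] by linarith
  then have "(2 * u + 8)^2 \<le> (8 * exp u)^2"
    using assms by (intro power_mono) simp_all
  also have "\<dots> = 64 * exp (2 * u)"
    by (simp add: power_mult_distrib exp_double[symmetric] mult.commute)
  finally show ?thesis .
qed

section \<open>Sub-\<sigma>-algebras and conditional expectation\<close>

lemma sigma_finite_subalgebra_vimage_algebra:
  assumes "finite_measure M" "f \<in> M \<rightarrow>\<^sub>M N"
  shows "sigma_finite_subalgebra M (vimage_algebra (space M) f N)"
proof -
  interpret finite_measure M by fact
  have "f \<in> space M \<rightarrow> space N" using measurable_space[OF assms(2)] by auto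
  then have "subalgebra M (vimage_algebra (space M) f N)"
    by (auto simp: subalgebra_def sets_vimage_algebra2 intro: measurable_sets[OF assms(2)])
  then have "finite_measure_subalgebra M (vimage_algebra (space M) f N)"
    by unfold_locales
  then show ?thesis by (rule finite_measure_subalgebra_is_sigma_finite)
qed

lemma measurable_vimage_algebra_factor:
  fixes g :: "'a \<Rightarrow> real"
  assumes g: "g \<in> borel_measurable (vimage_algebra X h N)" and h: "h \<in> X \<rightarrow> space N"
    and \<omega>: "\<omega> \<in> X" "\<omega>' \<in> X" and eq: "h \<omega> = h \<omega>'"
  shows "g \<omega> = g \<omega>'"
proof -
  have "g -` {g \<omega>} \<inter> X \<in> sets (vimage_algebra X h N)"
    using measurable_sets[OF g borel_closed[OF closed_singleton]] by simp
  then obtain A where A: "g -` {g \<omega>} \<inter> X = h -` A \<inter> X"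
    unfolding sets_vimage_algebra2[OF h] by auto
  have "\<omega> \<in> h -` A \<inter> X" using A \<omega>(1) by blast
  then have "\<omega>' \<in> g -` {g \<omega>} \<inter> X" using A \<omega>(2) eq by simp
  then show ?thesis by simp
qed

lemma norm_diff_sq_le:
  fixes a b :: real
  assumes "\<bar>a\<bar> \<le> B" "\<bar>b\<bar> \<le> C"
  shows "norm ((a - b)^2) \<le> (B + C)^2"
proof -
  have "\<bar>a - b\<bar> \<le> B + C" using assms by linarith
  then show ?thesis by (simp add: abs_le_square_iff[symmetric])
qed

lemma (in finite_measure) integrable_sq_diff:
  fixes f g :: "'a \<Rightarrow> real"
  assumes [measurable]: "f \<in> borel_measurable M" "g \<in> borel_measurable M"
    and "AE x in M. \<bar>f x\<bar> \<le> B" "AE x in M. \<bar>g x\<bar> \<le> C"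
  shows "integrable M (\<lambda>x. (f x - g x)^2)"
proof (rule integrable_const_bound[where B="(B + C)^2"])
  show "AE x in M. norm ((f x - g x)^2) \<le> (B + C)^2"
    using assms(3,4) by eventually_elim (rule norm_diff_sq_le)
qed measurable

lemma AE_abs_real_cond_exp_le:
  assumes "sigma_finite_subalgebra M F" "finite_measure M"
    and f: "f \<in> borel_measurable M" and fb: "\<And>x. x \<in> space M \<Longrightarrow> \<bar>f x\<bar> \<le> B"
  shows "AE x in M. \<bar>real_cond_exp M F f x\<bar> \<le> B"
proof -
  interpret sigma_finite_subalgebra M F by fact
  interpret finite_measure M by fact
  have fi: "integrable M f"
    by (rule integrable_const_bound[where B=B]) (auto simp: fb f)
  have "AE x in M. real_cond_exp M F f x \<le> B"
    by (rule real_cond_exp_le_c[OF fi]) (auto intro!: AE_I2 dest: fb)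
  moreover have "AE x in M. real_cond_exp M F f x \<ge> -B"
    by (rule real_cond_exp_ge_c[OF fi]) (auto intro!: AE_I2 dest: fb)
  ultimately show ?thesis by auto
qed

lemma real_cond_exp_pythagoras:
  assumes sf: "sigma_finite_subalgebra M F" and fin: "finite_measure M"
    and f[measurable]: "f \<in> borel_measurable M" and fb: "\<And>x. x \<in> space M \<Longrightarrow> \<bar>f x\<bar> \<le> B"
    and W[measurable]: "W \<in> borel_measurable F" and Wb: "AE x in M. \<bar>W x\<bar> \<le> C"
  shows "(\<integral>x. (f x - W x)^2 \<partial>M)
    = (\<integral>x. (f x - real_cond_exp M F f x)^2 \<partial>M) + (\<integral>x. (real_cond_exp M F f x - W x)^2 \<partial>M)"
proof -
  interpret sigma_finite_subalgebra M F by (rule sf)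
  interpret finite_measure M by (rule fin)
  let ?Y = "real_cond_exp M F f"
  have [measurable]: "W \<in> borel_measurable M"
    using W measurable_from_subalg[OF subalg] by blast
  have fbA: "AE x in M. \<bar>f x\<bar> \<le> B" by (auto intro!: AE_I2 fb)
  have Yb: "AE x in M. \<bar>?Y x\<bar> \<le> B" by (rule AE_abs_real_cond_exp_le[OF sf fin f fb])
  have i1: "integrable M (\<lambda>x. (f x - ?Y x)^2)" by (rule integrable_sq_diff[OF _ _ fbA Yb]) simp_all
  have i2: "integrable M (\<lambda>x. (?Y x - W x)^2)" by (rule integrable_sq_diff[OF _ _ Yb Wb]) simp_all
  have i3: "integrable M (\<lambda>x. (?Y x - W x) * f x)"
  proof (rule integrable_const_bound[where B="(B + C) * B"])
    show "AE x in M. norm ((?Y x - W x) * f x) \<le> (B + C) * B"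
      using Yb Wb fbA by eventually_elim (auto simp: abs_mult intro!: mult_mono abs_triangle_ineq4[THEN order_trans])
  qed measurable
  have [measurable]: "(\<lambda>x. ?Y x - W x) \<in> borel_measurable F" by measurable
  have cross: "(\<integral>x. (?Y x - W x) * ?Y x \<partial>M) = (\<integral>x. (?Y x - W x) * f x \<partial>M)"
    and i4: "integrable M (\<lambda>x. (?Y x - W x) * ?Y x)"
    using real_cond_exp_intg[OF i3 _ f] by auto
  have "(\<integral>x. (f x - W x)^2 \<partial>M)
      = (\<integral>x. (f x - ?Y x)^2 + (?Y x - W x)^2 + 2 * ((?Y x - W x) * f x - (?Y x - W x) * ?Y x) \<partial>M)"
    by (rule Bochner_Integration.integral_cong) (simp_all add: power2_eq_square algebra_simps)
  also have "\<dots> = (\<integral>x. (f x - ?Y x)^2 \<partial>M) + (\<integral>x. (?Y x - W x)^2 \<partial>M)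
      + 2 * ((\<integral>x. (?Y x - W x) * f x \<partial>M) - (\<integral>x. (?Y x - W x) * ?Y x \<partial>M))"
    using i1 i2 i3 i4 by simp
  finally show ?thesis using cross by simp
qed

lemma real_cond_exp_excess_risk_le:
  assumes sf: "sigma_finite_subalgebra M F" and fin: "finite_measure M"
    and f: "f \<in> borel_measurable M" and fb: "\<And>x. x \<in> space M \<Longrightarrow> \<bar>f x\<bar> \<le> B"
    and V: "V \<in> borel_measurable F" "AE x in M. \<bar>V x\<bar> \<le> C"
    and W: "W \<in> borel_measurable F" "AE x in M. \<bar>W x\<bar> \<le> D"
  shows "(\<integral>x. (f x - V x)^2 \<partial>M) - (\<integral>x. (f x - W x)^2 \<partial>M) \<le> (\<integral>x. (V x - real_cond_exp M F f x)^2 \<partial>M)"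
  using real_cond_exp_pythagoras[OF sf fin f fb V] real_cond_exp_pythagoras[OF sf fin f fb W]
  by (simp add: power2_commute)

section \<open>The permuted Gaussian sequence model\<close>

lemma finite_perms: "finite (perms n)"
  unfolding perms_def by (rule finite_permutations) simp

lemma card_perms: "card (perms n) = fact n"
  unfolding perms_def by (rule card_permutations) simp_all

lemma space_perm_gauss_model:
  "space (perm_gauss_model n ts) = perms n \<times> space (PiM {..<n} (\<lambda>_. lborel::real measure))"
  by (simp add: perm_gauss_model_def space_pair_measure)

lemma sets_perm_gauss_model[measurable_cong]:
  "sets (perm_gauss_model n ts) = sets (count_space (perms n) \<Otimes>\<^sub>M PiM {..<n} (\<lambda>_. lborel::real measure))"
  by (simp add: perm_gauss_model_def)

lemma measurable_perm_gauss_model_iff: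
  "f \<in> perm_gauss_model n ts \<rightarrow>\<^sub>M N \<longleftrightarrow>
   f \<in> count_space (perms n) \<Otimes>\<^sub>M PiM {..<n} (\<lambda>_. lborel::real measure) \<rightarrow>\<^sub>M N"
  by (subst measurable_cong_sets[OF sets_perm_gauss_model[of n ts] refl]) (rule refl)

lemma measurable_perm_gauss_model:
  assumes "\<And>p. p \<in> perms n \<Longrightarrow> (\<lambda>x. f (p, x)) \<in> PiM {..<n} (\<lambda>_. lborel) \<rightarrow>\<^sub>M N"
  shows "f \<in> perm_gauss_model n ts \<rightarrow>\<^sub>M N"
  unfolding measurable_perm_gauss_model_iff
  by (rule measurable_pair_measure_countable1) (use assms in \<open>auto simp: countable_finite finite_perms\<close>)

lemma nn_integral_perm_gauss_model:
  assumes [measurable]: "\<And>p. p \<in> perms n \<Longrightarrow> f p \<in> borel_measurable (PiM {..<n} (\<lambda>_. lborel))"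
  shows "(\<integral>\<^sup>+ \<omega>. f (fst \<omega>) (snd \<omega>) \<partial>perm_gauss_model n ts) =
    (\<Sum>p\<in>perms n. ennreal (1 / fact n) * \<integral>\<^sup>+ x. prod_gauss n (ts \<circ> p) x * f p x \<partial>PiM {..<n} (\<lambda>_. lborel))"
proof -
  interpret P: product_sigma_finite "\<lambda>_::nat. (lborel::real measure)"
    by (simp add: product_sigma_finite_def sigma_finite_lborel)
  interpret S: sigma_finite_measure "PiM {..<n} (\<lambda>_. lborel::real measure)"
    using P.sigma_finite[of "{..<n}"] by simp
  let ?d = "\<lambda>(p, x). ennreal ((1 / fact n) * (\<Prod>k<n. gauss (ts (p k)) (x k)))"
  have countable: "countable (perms n)" by (simp add: countable_finite finite_perms)
  have dm: "?d \<in> borel_measurable (count_space (perms n) \<Otimes>\<^sub>M PiM {..<n} (\<lambda>_. lborel))"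
    by (rule measurable_pair_measure_countable1[OF countable]) simp
  have fm: "(\<lambda>\<omega>. f (fst \<omega>) (snd \<omega>)) \<in> borel_measurable (count_space (perms n) \<Otimes>\<^sub>M PiM {..<n} (\<lambda>_. lborel))"
    by (rule measurable_pair_measure_countable1[OF countable]) simp
  have d: "ennreal ((1 / fact n) * (\<Prod>k<n. gauss (ts (p k)) (x k))) = ennreal (1 / fact n) * prod_gauss n (ts \<circ> p) x"
    for p x
    by (simp add: ennreal_mult[symmetric] prod_nonneg prod_ennreal normal_density_nonneg)
  have "(\<integral>\<^sup>+ \<omega>. f (fst \<omega>) (snd \<omega>) \<partial>perm_gauss_model n ts)
      = (\<integral>\<^sup>+ \<omega>. ?d \<omega> * f (fst \<omega>) (snd \<omega>) \<partial>(count_space (perms n) \<Otimes>\<^sub>M PiM {..<n} (\<lambda>_. lborel)))"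
    unfolding perm_gauss_model_def by (rule nn_integral_density[OF dm fm])
  also have "\<dots> = (\<integral>\<^sup>+ p. \<integral>\<^sup>+ x. ?d (p, x) * f p x \<partial>PiM {..<n} (\<lambda>_. lborel) \<partial>count_space (perms n))"
    by (subst S.nn_integral_fst[symmetric]) (use dm fm in \<open>simp_all add: split_beta'\<close>)
  also have "\<dots> = (\<Sum>p\<in>perms n. \<integral>\<^sup>+ x. ?d (p, x) * f p x \<partial>PiM {..<n} (\<lambda>_. lborel))"
    by (rule nn_integral_count_space_finite[OF finite_perms])
  also have "\<dots> = (\<Sum>p\<in>perms n. ennreal (1 / fact n) * \<integral>\<^sup>+ x. prod_gauss n (ts \<circ> p) x * f p x \<partial>PiM {..<n} (\<lambda>_. lborel))"
  proof (rule sum.cong[OF refl])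
    fix p assume "p \<in> perms n"
    then have [measurable]: "f p \<in> borel_measurable (PiM {..<n} (\<lambda>_. lborel))" by (rule assms)
    have "(\<integral>\<^sup>+ x. ?d (p, x) * f p x \<partial>PiM {..<n} (\<lambda>_. lborel))
        = (\<integral>\<^sup>+ x. ennreal (1 / fact n) * (prod_gauss n (ts \<circ> p) x * f p x) \<partial>PiM {..<n} (\<lambda>_. lborel))"
      by (simp only: prod.case d mult.assoc)
    also have "\<dots> = ennreal (1 / fact n) * \<integral>\<^sup>+ x. prod_gauss n (ts \<circ> p) x * f p x \<partial>PiM {..<n} (\<lambda>_. lborel)"
      by (rule nn_integral_cmult) measurable
    finally show "(\<integral>\<^sup>+ x. ?d (p, x) * f p x \<partial>PiM {..<n} (\<lambda>_. lborel))
        = ennreal (1 / fact n) * \<integral>\<^sup>+ x. prod_gauss n (ts \<circ> p) x * f p x \<partial>PiM {..<n} (\<lambda>_. lborel)" .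
  qed
  finally show ?thesis .
qed

lemma prob_space_perm_gauss_model: "prob_space (perm_gauss_model n ts)"
proof
  let ?M = "perm_gauss_model n ts"
  have "emeasure ?M (space ?M) = (\<integral>\<^sup>+ \<omega>. (\<lambda>_ _. 1) (fst \<omega>) (snd \<omega>) \<partial>?M)"
    by simp
  also have "\<dots> = (\<Sum>p\<in>perms n. ennreal (1 / fact n))"
    by (subst nn_integral_perm_gauss_model)
      (simp_all add: nn_integral_PiM_prod_gauss[where J="{}", simplified])
  also have "\<dots> = 1"
    by (simp add: card_perms ennreal_of_nat_eq_real_of_nat ennreal_mult[symmetric])
  finally show "emeasure ?M (space ?M) = 1" .
qed

lemma measurable_snd_perm_gauss_model:
  "snd \<in> perm_gauss_model n ts \<rightarrow>\<^sub>M PiM {..<n} (\<lambda>_. borel::real measure)"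
proof -
  have "sets (PiM {..<n} (\<lambda>_. lborel::real measure)) = sets (PiM {..<n} (\<lambda>_. borel::real measure))"
    by (rule sets_PiM_cong) auto
  moreover have "snd \<in> count_space (perms n) \<Otimes>\<^sub>M PiM {..<n} (\<lambda>_. lborel) \<rightarrow>\<^sub>M PiM {..<n} (\<lambda>_. lborel::real measure)"
    by measurable
  ultimately show ?thesis
    unfolding measurable_perm_gauss_model_iff using measurable_cong_sets[OF refl] by metis
qed

lemma borel_measurable_obs:
  "i < n \<Longrightarrow> (\<lambda>\<omega>. snd \<omega> i) \<in> borel_measurable (perm_gauss_model n ts)"
  using measurable_compose[OF measurable_snd_perm_gauss_model measurable_component_singleton[of i]]
  by simp

lemma borel_measurable_theta_rv[measurable]: "theta_rv ts i \<in> borel_measurable (perm_gauss_model n ts)"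
  unfolding theta_rv_def by (rule measurable_perm_gauss_model) simp

lemma abs_theta_rv_le:
  assumes "\<forall>a<n. ts a \<in> {-\<mu>..\<mu>}" "i < n" "\<omega> \<in> space (perm_gauss_model n ts)"
  shows "\<bar>theta_rv ts i \<omega>\<bar> \<le> \<mu>"
proof -
  have "fst \<omega> permutes {..<n}" using assms(3) by (auto simp: space_perm_gauss_model perms_def)
  then have "fst \<omega> i < n" using assms(2) by (metis lessThan_iff permutes_in_image)
  then show ?thesis using assms(1) unfolding theta_rv_def by auto
qed

lemma sigma_finite_subalgebra_sigma_X: "sigma_finite_subalgebra (perm_gauss_model n ts) (sigma_X n ts)"
  unfolding sigma_X_def
  by (rule sigma_finite_subalgebra_vimage_algebra[OF prob_space.finite_measure[OF prob_space_perm_gauss_model]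
        measurable_snd_perm_gauss_model])

lemma sigma_finite_subalgebra_sigma_Xi:
  "i < n \<Longrightarrow> sigma_finite_subalgebra (perm_gauss_model n ts) (sigma_Xi n ts i)"
  unfolding sigma_Xi_def
  by (rule sigma_finite_subalgebra_vimage_algebra[OF prob_space.finite_measure[OF prob_space_perm_gauss_model]
        borel_measurable_obs])

definition obs_section :: "nat \<Rightarrow> nat \<Rightarrow> real \<Rightarrow> (nat \<Rightarrow> nat) \<times> (nat \<Rightarrow> real)" where
  "obs_section n i t = (id, (restrict (\<lambda>_. 0) ({..<n} - {i}))(i := t))"

lemma obs_section_in_space: "i < n \<Longrightarrow> obs_section n i t \<in> space (perm_gauss_model n ts)"
  by (auto simp: obs_section_def space_perm_gauss_model perms_def space_PiM PiE_def extensional_def)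

lemma measurable_obs_section: "i < n \<Longrightarrow> obs_section n i \<in> lborel \<rightarrow>\<^sub>M perm_gauss_model n ts"
proof -
  assume i: "i < n"
  have "insert i ({..<n} - {i}) = {..<n}" using i by auto
  then have "(\<lambda>t. (restrict (\<lambda>_. 0) ({..<n} - {i}))(i := t)) \<in> lborel \<rightarrow>\<^sub>M PiM {..<n} (\<lambda>_. lborel::real measure)"
    using measurable_component_update[of "restrict (\<lambda>_. 0) ({..<n} - {i})" "{..<n} - {i}" "\<lambda>_. lborel" i]
    by (simp add: space_PiM)
  then show ?thesis
    unfolding obs_section_def measurable_cong_sets[OF refl sets_perm_gauss_model]
    by (intro measurable_Pair measurable_const) (simp_all add: perms_def permutes_id)
qed

lemma sigma_Xi_measurable_factor:
  fixes g :: "(nat \<Rightarrow> nat) \<times> (nat \<Rightarrow> real) \<Rightarrow> real"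
  assumes g: "g \<in> borel_measurable (sigma_Xi n ts i)" and i: "i < n"
  shows "(\<lambda>t. g (obs_section n i t)) \<in> borel_measurable borel"
    and "\<And>\<omega>. \<omega> \<in> space (perm_gauss_model n ts) \<Longrightarrow> g \<omega> = g (obs_section n i (snd \<omega> i))"
proof -
  have "g \<in> borel_measurable (perm_gauss_model n ts)"
    using g measurable_from_subalg[OF sigma_finite_subalgebra.subalg[OF sigma_finite_subalgebra_sigma_Xi[OF i]]]
    by blast
  then have "(\<lambda>t. g (obs_section n i t)) \<in> borel_measurable lborel"
    using measurable_compose[OF measurable_obs_section[OF i]] by blast
  then show "(\<lambda>t. g (obs_section n i t)) \<in> borel_measurable borel"
    by (simp add: measurable_lborel1)
  fix \<omega> assume "\<omega> \<in> space (perm_gauss_model n ts)"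
  then show "g \<omega> = g (obs_section n i (snd \<omega> i))"
    by (intro measurable_vimage_algebra_factor[OF g[unfolded sigma_Xi_def]] obs_section_in_space[OF i])
      (simp_all add: obs_section_def)
qed

lemma measurable_snd_sigma_X: "snd \<in> sigma_X n ts \<rightarrow>\<^sub>M PiM {..<n} (\<lambda>_. borel::real measure)"
  unfolding sigma_X_def
  by (rule measurable_vimage_algebra1) (use measurable_space[OF measurable_snd_perm_gauss_model] in blast)

lemma theta_S_measurable_sigma_X:
  assumes i: "i < n"
  shows "theta_S n ts i \<in> borel_measurable (sigma_X n ts)"
proof -
  have g: "theta_S n ts i \<in> borel_measurable (sigma_Xi n ts i)"
    unfolding theta_S_def by simp
  note factor = sigma_Xi_measurable_factor[OF g i]
  have "(\<lambda>\<omega>. theta_S n ts i (obs_section n i (snd \<omega> i))) \<in> borel_measurable (sigma_X n ts)"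
    using measurable_compose[OF measurable_compose[OF measurable_snd_sigma_X measurable_component_singleton] factor(1)] i
    by (simp add: comp_def)
  then show ?thesis
    by (rule measurable_cong[THEN iffD1, rotated]) (auto simp: sigma_X_def factor(2))
qed

section \<open>The hard instance\<close>

locale gap_design =
  fixes n m :: nat and \<mu> s :: real
  assumes pairs_le: "2 * m \<le> n" and spacing_ge: "s \<ge> 16" and centers_fit: "real m * s + 8 \<le> 2 * \<mu>"
begin

definition center :: "nat \<Rightarrow> real" where
  "center k = -\<mu> + 4 + real k * s"

definition cluster :: "nat \<Rightarrow> nat" where
  "cluster a = (if a < 2 * m then a div 2 + 1 else 0)"

definition pair_sign :: "nat \<Rightarrow> real" where
  "pair_sign a = (if even a then 1 else -1)"

definition offset :: "nat \<Rightarrow> real" where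
  "offset a = (if a < 2 * m then 4 * pair_sign a else 0)"

definition theta_star :: "nat \<Rightarrow> real" where
  "theta_star a = center (cluster a) + offset a"

definition partner :: "nat \<Rightarrow> nat" where
  "partner a = (if a < 2 * m then (if even a then a + 1 else a - 1) else a)"

definition margin :: real where
  "margin = s / 2 - 4"

definition in_window :: "nat \<Rightarrow> real \<Rightarrow> bool" where
  "in_window k t \<longleftrightarrow> \<bar>t - center k\<bar> < s / 2"

definition clip :: "real \<Rightarrow> real" where
  "clip t = max (-\<mu>) (min \<mu> t)"

text \<open>When every noise is below the margin, the sum in \<open>window_estimate\<close> has the single nonzero term
  \<open>X\<^sub>i - X\<^sub>j\<close> with \<open>j\<close> the coordinate carrying the partner value, so the estimate moves the center by
  4 towards the larger of the two.\<close>

definition window_estimate :: "nat \<Rightarrow> nat \<Rightarrow> (nat \<Rightarrow> real) \<Rightarrow> real" where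
  "window_estimate i k x = (if k = 0 then center 0
     else center k + 4 * sgn (\<Sum>j\<in>{..<n} - {i}. if in_window k (x j) then x i - x j else 0))"

definition pi_estimate :: "nat \<Rightarrow> (nat \<Rightarrow> real) \<Rightarrow> real" where
  "pi_estimate i x = (\<Sum>k\<le>m. if in_window k (x i) then window_estimate i k x else 0)
     + (if \<forall>k\<le>m. \<not> in_window k (x i) then clip (x i) else 0)"

lemma mu_ge_4: "\<mu> \<ge> 4"
  using centers_fit spacing_ge by (smt (verit) of_nat_0_le_iff mult_nonneg_nonneg)

lemma margin_ge_4: "margin \<ge> 4"
  using spacing_ge by (simp add: margin_def)

lemma center_dist_ge: "k \<noteq> k' \<Longrightarrow> s \<le> \<bar>center k - center k'\<bar>"
proof -
  assume "k \<noteq> k'"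
  then have "\<bar>real k - real k'\<bar> \<ge> 1" by (cases "k < k'") auto
  moreover have "center k - center k' = (real k - real k') * s" by (simp add: center_def algebra_simps)
  ultimately show ?thesis using spacing_ge by (simp add: abs_mult)
qed

lemma in_window_unique: "in_window k t \<Longrightarrow> in_window k' t \<Longrightarrow> k = k'"
  using center_dist_ge[of k k'] unfolding in_window_def by (cases "k = k'") (auto, smt (verit))

lemma pi_estimate_in_window:
  assumes "k \<le> m" "in_window k (x i)"
  shows "pi_estimate i x = window_estimate i k x"
proof -
  have "{k' \<in> {..m}. in_window k' (x i)} = {k}" using assms in_window_unique by auto
  then have "(\<Sum>k'\<le>m. if in_window k' (x i) then window_estimate i k' x else 0) = window_estimate i k x"
    by (simp add: sum.inter_filter[symmetric])
  then show ?thesis using assms by (auto simp: pi_estimate_def)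
qed

lemma pi_estimate_outside_windows:
  "\<forall>k\<le>m. \<not> in_window k (x i) \<Longrightarrow> pi_estimate i x = clip (x i)"
  by (simp add: pi_estimate_def)

lemma window_estimate_near_center: "\<bar>window_estimate i k x - center k\<bar> \<le> 4"
  by (auto simp: window_estimate_def sgn_if abs_mult)

lemma cluster_le: "cluster a \<le> m"
  by (auto simp: cluster_def)

lemma theta_star_near_center: "\<bar>theta_star a - center (cluster a)\<bar> \<le> 4"
  by (simp add: theta_star_def offset_def pair_sign_def)

lemma theta_star_range: "theta_star a \<in> {-\<mu>..\<mu>}"
proof (cases "a < 2 * m")
  case True
  then have "1 \<le> cluster a" by (simp add: cluster_def)
  then have "s \<le> real (cluster a) * s" "real (cluster a) * s \<le> real m * s"
    using cluster_le spacing_ge by (simp_all add: mult_right_mono)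
  moreover have "theta_star a = -\<mu> + 4 + real (cluster a) * s + offset a"
    by (simp add: theta_star_def center_def)
  moreover have "\<bar>offset a\<bar> \<le> 4"
    by (simp add: offset_def pair_sign_def)
  ultimately show ?thesis using centers_fit spacing_ge unfolding atLeastAtMost_iff by arith
next
  case False
  then show ?thesis using mu_ge_4 by (simp add: theta_star_def offset_def center_def cluster_def)
qed

lemma partner_less: "a < n \<Longrightarrow> partner a < n"
  using pairs_le by (auto simp: partner_def)

lemma partner_partner: "partner (partner a) = a"
  by (auto simp: partner_def)

lemma partner_neq: "a < 2 * m \<Longrightarrow> partner a \<noteq> a"
  by (auto simp: partner_def) presburger

lemma cluster_partner: "cluster (partner a) = cluster a"
  by (auto simp: partner_def cluster_def) presburger

lemma offset_partner: "offset (partner a) = - offset a"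
  by (auto simp: partner_def offset_def pair_sign_def)

lemma cluster_eq_imp_partner:
  assumes "cluster a = cluster b" "cluster a \<noteq> 0"
  shows "b = a \<or> b = partner a"
  using assms by (auto simp: cluster_def partner_def split: if_splits) presburger+

lemma partner_permutes: "partner permutes {..<n}"
proof (rule bij_imp_permutes)
  show "bij_betw partner {..<n} {..<n}"
    by (rule bij_betw_byWitness[where f'=partner]) (auto simp: partner_partner partner_less)
  show "\<And>x. x \<notin> {..<n} \<Longrightarrow> partner x = x" using pairs_le by (auto simp: partner_def)
qed

lemma in_window_cluster: "\<bar>t - theta_star a\<bar> < margin \<Longrightarrow> in_window (cluster a) t"
  using theta_star_near_center[of a] unfolding in_window_def margin_def by linarith

lemma abs_pi_estimate_le: "\<bar>pi_estimate i x\<bar> \<le> \<mu>"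
proof (cases "\<exists>k\<le>m. in_window k (x i)")
  case True
  then obtain k where k: "k \<le> m" "in_window k (x i)" by auto
  have "real k * s \<le> real m * s" "0 \<le> real k * s" using k(1) spacing_ge by (simp_all add: mult_right_mono)
  then show ?thesis
    using pi_estimate_in_window[of k x i, OF k] window_estimate_near_center[of i k x] centers_fit
    unfolding center_def by (smt (verit))
next
  case False
  then show ?thesis using mu_ge_4 by (auto simp: pi_estimate_outside_windows clip_def)
qed

lemma pi_estimate_error_le: "\<bar>theta_star a - pi_estimate i x\<bar> \<le> 2 * \<bar>x i - theta_star a\<bar> + 8"
proof (cases "\<exists>k\<le>m. in_window k (x i)")
  case True
  then obtain k where k: "k \<le> m" "in_window k (x i)" by auto
  have G: "\<bar>pi_estimate i x - center k\<bar> \<le> 4"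
    using pi_estimate_in_window[of k x i, OF k] window_estimate_near_center by simp
  have T: "\<bar>theta_star a - center (cluster a)\<bar> \<le> 4" by (rule theta_star_near_center)
  show ?thesis
  proof (cases "k = cluster a")
    case True
    then show ?thesis using G T by (smt (verit))
  next
    case False
    then have "s \<le> \<bar>center k - center (cluster a)\<bar>" by (rule center_dist_ge)
    moreover have "\<bar>center k - center (cluster a)\<bar>
        \<le> \<bar>x i - center k\<bar> + \<bar>x i - theta_star a\<bar> + \<bar>theta_star a - center (cluster a)\<bar>"
      by arith
    moreover have "\<bar>theta_star a - pi_estimate i x\<bar>
        \<le> \<bar>x i - theta_star a\<bar> + \<bar>x i - center k\<bar> + \<bar>pi_estimate i x - center k\<bar>"
      by arith
    ultimately show ?thesis using G T k(2) spacing_ge unfolding in_window_def by linarith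
  qed
next
  case False
  then have G: "pi_estimate i x = clip (x i)" by (simp add: pi_estimate_outside_windows)
  have "\<bar>theta_star a - clip (x i)\<bar> \<le> \<bar>x i - theta_star a\<bar>"
    using theta_star_range[of a] by (auto simp: clip_def)
  also have "\<dots> \<le> 2 * \<bar>x i - theta_star a\<bar> + 8" by simp
  finally show ?thesis unfolding G .
qed

definition partner_coord :: "(nat \<Rightarrow> nat) \<Rightarrow> nat \<Rightarrow> nat" where
  "partner_coord p i = inv p (partner (p i))"

lemma partner_coord:
  assumes p: "p permutes {..<n}" and i: "i < n"
  shows "partner_coord p i < n" and "p (partner_coord p i) = partner (p i)"
    and "p i < 2 * m \<Longrightarrow> partner_coord p i \<noteq> i"
proof -
  show pj: "p (partner_coord p i) = partner (p i)"
    unfolding partner_coord_def by (rule permutes_inverses(1)[OF p])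
  have "p i < n" using p i by (metis lessThan_iff permutes_in_image)
  then show "partner_coord p i < n"
    using permutes_in_image[OF permutes_inv[OF p]] partner_less by (simp add: partner_coord_def)
  show "p i < 2 * m \<Longrightarrow> partner_coord p i \<noteq> i"
    using pj partner_neq[of "p i"] by auto
qed

lemma pi_estimate_unpaired:
  assumes "\<bar>x i - theta_star a\<bar> < margin" "\<not> a < 2 * m"
  shows "pi_estimate i x = theta_star a"
proof -
  have "cluster a = 0" using assms(2) by (simp add: cluster_def)
  then have "pi_estimate i x = window_estimate i 0 x"
    using in_window_cluster[OF assms(1)] by (intro pi_estimate_in_window) simp_all
  then show ?thesis using assms(2) \<open>cluster a = 0\<close>
    by (simp add: window_estimate_def theta_star_def offset_def)
qed

lemma pi_estimate_paired:
  assumes p: "p permutes {..<n}" and i: "i < n"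
    and near: "\<forall>l<n. \<bar>x l - theta_star (p l)\<bar> < margin" and pair: "p i < 2 * m"
  shows "pi_estimate i x = center (cluster (p i)) + 4 * sgn (x i - x (partner_coord p i))"
proof -
  define k where "k = cluster (p i)"
  define j where "j = partner_coord p i"
  note j = partner_coord[OF p i, folded j_def]
  have k0: "k \<noteq> 0" using pair by (simp add: k_def cluster_def)
  have win: "in_window (cluster (p l)) (x l)" if "l < n" for l
    using near that by (simp add: in_window_cluster)
  have "in_window k (x l) \<longleftrightarrow> l = j" if l: "l \<in> {..<n} - {i}" for l
  proof
    assume "in_window k (x l)"
    then have "cluster (p l) = k" using win l in_window_unique by blast
    then have "p l = p i \<or> p l = partner (p i)" using cluster_eq_imp_partner k0 by (auto simp: k_def)
    moreover have "p l \<noteq> p i" using l permutes_inj[OF p] by (auto simp: inj_def)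
    ultimately have "p l = p j" using j(2) by simp
    then show "l = j" using permutes_inj[OF p] by (auto simp: inj_def)
  qed (use win[OF j(1)] j(2) cluster_partner[of "p i"] in \<open>simp add: k_def\<close>)
  then have "{l \<in> {..<n} - {i}. in_window k (x l)} = {j}" using j pair by auto
  then have "(\<Sum>l\<in>{..<n} - {i}. if in_window k (x l) then x i - x l else 0) = x i - x j"
    by (simp add: sum.inter_filter[symmetric])
  moreover have "pi_estimate i x = window_estimate i k x"
    using win[OF i] by (intro pi_estimate_in_window) (simp_all add: k_def cluster_le)
  ultimately show ?thesis using k0 by (simp add: window_estimate_def k_def j_def)
qed

lemma pi_estimate_error_sq_le:
  assumes p: "p permutes {..<n}" and i: "i < n"
    and near: "\<forall>l<n. \<bar>x l - theta_star (p l)\<bar> < margin"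
  shows "(theta_star (p i) - pi_estimate i x)^2
    \<le> (if p i < 2 * m \<and> 8 \<le> pair_sign (p i) *
          ((x (partner_coord p i) - theta_star (p (partner_coord p i))) - (x i - theta_star (p i)))
        then 64 else 0)"
proof (cases "p i < 2 * m")
  case True
  define j where "j = partner_coord p i"
  define c where "c = center (cluster (p i))"
  define \<sigma> where "\<sigma> = pair_sign (p i)"
  have \<sigma>: "\<sigma> = 1 \<or> \<sigma> = -1" by (simp add: \<sigma>_def pair_sign_def)
  have ti: "theta_star (p i) = c + 4 * \<sigma>"
    using True by (simp add: theta_star_def offset_def c_def \<sigma>_def)
  have tj: "theta_star (p j) = c - 4 * \<sigma>"
    using True partner_coord(2)[OF p i] offset_partner[of "p i"] cluster_partner[of "p i"]
    by (simp add: theta_star_def offset_def c_def \<sigma>_def j_def)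
  have G: "pi_estimate i x = c + 4 * sgn (x i - x j)"
    using pi_estimate_paired[OF p i near True] by (simp add: c_def j_def)
  show ?thesis
    using True \<sigma> unfolding ti tj G j_def[symmetric] \<sigma>_def[symmetric]
    by (auto simp: sgn_if power2_eq_square)
next
  case False
  then show ?thesis using pi_estimate_unpaired[of x i "p i"] near i by simp
qed

text \<open>Exponential-moment majorants of the two ways the competitor can fail: the pair is misordered by
  the noise, or some noise leaves the margin.\<close>

definition swap_term :: "(nat \<Rightarrow> nat) \<Rightarrow> nat \<Rightarrow> (nat \<Rightarrow> real) \<Rightarrow> real" where
  "swap_term p i x = (if p i < 2 * m then 64 * exp (4 * pair_sign (p i) *
      ((x (partner_coord p i) - theta_star (p (partner_coord p i))) - (x i - theta_star (p i))) - 32) else 0)"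

definition tail_term :: "(nat \<Rightarrow> nat) \<Rightarrow> nat \<Rightarrow> nat \<Rightarrow> (nat \<Rightarrow> real) \<Rightarrow> real" where
  "tail_term p i l x =
     64 * exp (2 * \<bar>x i - theta_star (p i)\<bar>) * exp (margin * \<bar>x l - theta_star (p l)\<bar> - margin^2)"

definition tail_bound :: real where
  "tail_bound = 256 * exp (-(margin^2)/2 + 2 * margin + 2)"

lemma pi_estimate_error_sq_le_tails:
  assumes p: "p permutes {..<n}" and i: "i < n"
  shows "(theta_star (p i) - pi_estimate i x)^2 \<le> swap_term p i x + (\<Sum>l<n. tail_term p i l x)"
proof (cases "\<forall>l<n. \<bar>x l - theta_star (p l)\<bar> < margin")
  case True
  define d where "d = pair_sign (p i) *
    ((x (partner_coord p i) - theta_star (p (partner_coord p i))) - (x i - theta_star (p i)))"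
  have "(if p i < 2 * m \<and> 8 \<le> d then 64 else 0) \<le> swap_term p i x"
  proof (cases "p i < 2 * m \<and> 8 \<le> d")
    case True
    then have "1 \<le> exp (4 * d - 32)" by simp
    then show ?thesis using True by (simp add: swap_term_def d_def mult.assoc)
  qed (simp add: swap_term_def)
  then have "(theta_star (p i) - pi_estimate i x)^2 \<le> swap_term p i x"
    using pi_estimate_error_sq_le[OF p i True] by (simp add: d_def)
  moreover have "0 \<le> (\<Sum>l<n. tail_term p i l x)" by (simp add: sum_nonneg tail_term_def)
  ultimately show ?thesis by linarith
next
  case False
  then obtain l where l: "l < n" "margin \<le> \<bar>x l - theta_star (p l)\<bar>" by auto
  define u where "u = \<bar>x i - theta_star (p i)\<bar>"
  have "(theta_star (p i) - pi_estimate i x)^2 \<le> (2 * u + 8)^2"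
    using pi_estimate_error_le[of "p i" i x] by (simp add: u_def abs_le_square_iff[symmetric])
  also have "\<dots> \<le> 64 * exp (2 * u)"
    by (rule affine_sq_le_exp) (simp add: u_def)
  also have "\<dots> \<le> tail_term p i l x"
  proof -
    have "margin * margin \<le> margin * \<bar>x l - theta_star (p l)\<bar>"
      using l(2) margin_ge_4 by (intro mult_left_mono) auto
    then show ?thesis by (simp add: tail_term_def u_def power2_eq_square)
  qed
  also have "\<dots> \<le> (\<Sum>l<n. tail_term p i l x)"
    using l(1) by (intro member_le_sum) (simp_all add: tail_term_def)
  also have "\<dots> \<le> swap_term p i x + (\<Sum>l<n. tail_term p i l x)"
    by (simp add: swap_term_def)
  finally show ?thesis .
qed

lemma nn_integral_swap_term:
  assumes p: "p permutes {..<n}" and i: "i < n"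
  shows "(\<integral>\<^sup>+ x. prod_gauss n (theta_star \<circ> p) x * ennreal (swap_term p i x) \<partial>PiM {..<n} (\<lambda>_. lborel))
    = ennreal (if p i < 2 * m then 64 * exp (-16) else 0)"
proof (cases "p i < 2 * m")
  case True
  define j where "j = partner_coord p i"
  define \<sigma> where "\<sigma> = pair_sign (p i)"
  have j: "j < n" "j \<noteq> i" using partner_coord[OF p i] True by (simp_all add: j_def)
  have \<sigma>2: "\<sigma>^2 = 1" by (simp add: \<sigma>_def pair_sign_def)
  define U where "U t = 64 * exp (-32) * exp ((-4 * \<sigma>) * (t - theta_star (p i)))" for t
  define V where "V t = 1 * exp ((4 * \<sigma>) * (t - theta_star (p j)))" for t
  have "swap_term p i x = U (x i) * V (x j)" for x
    using True unfolding swap_term_def j_def[symmetric] \<sigma>_def[symmetric] U_def V_def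
    by (simp add: algebra_simps flip: exp_add)
  then have "(\<integral>\<^sup>+ x. prod_gauss n (theta_star \<circ> p) x * ennreal (swap_term p i x) \<partial>PiM {..<n} (\<lambda>_. lborel))
      = (\<integral>\<^sup>+ x. prod_gauss n (theta_star \<circ> p) x * (ennreal (U (x i)) * ennreal (V (x j))) \<partial>PiM {..<n} (\<lambda>_. lborel))"
    by (simp add: ennreal_mult U_def V_def)
  also have "\<dots> = (\<integral>\<^sup>+ t. ennreal (gauss ((theta_star \<circ> p) i) t) * ennreal (U t) \<partial>lborel)
      * (\<integral>\<^sup>+ t. ennreal (gauss ((theta_star \<circ> p) j) t) * ennreal (V t) \<partial>lborel)"
    by (rule nn_integral_PiM_prod_gauss_pair[OF i j(1) j(2)[symmetric]]) (simp_all add: U_def[abs_def] V_def[abs_def])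
  also have "\<dots> = ennreal (64 * exp (-32) * exp ((-4 * \<sigma>)^2/2)) * ennreal (1 * exp ((4 * \<sigma>)^2/2))"
    unfolding U_def V_def by (simp only: comp_def nn_integral_gauss_exp exp_ge_zero mult_nonneg_nonneg zero_le_one)
  also have "\<dots> = ennreal (64 * exp (-32) * exp 8) * ennreal (exp 8)"
    using \<sigma>2 by (simp add: power_mult_distrib)
  also have "\<dots> = ennreal (64 * exp (-16))"
    by (simp add: ennreal_mult[symmetric] mult.assoc exp_add[symmetric])
  finally show ?thesis using True by simp
qed (simp add: swap_term_def)

lemma nn_integral_tail_term_same_le:
  assumes p: "p permutes {..<n}" and i: "i < n"
  shows "(\<integral>\<^sup>+ x. prod_gauss n (theta_star \<circ> p) x * ennreal (tail_term p i i x) \<partial>PiM {..<n} (\<lambda>_. lborel))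
    \<le> ennreal tail_bound"
proof -
  define U where "U t = 64 * exp (-(margin^2)) * exp ((2 + margin) * \<bar>t - theta_star (p i)\<bar>)" for t
  have "tail_term p i i x = U (x i)" for x
    unfolding tail_term_def U_def by (simp add: algebra_simps flip: exp_add)
  then have "(\<integral>\<^sup>+ x. prod_gauss n (theta_star \<circ> p) x * ennreal (tail_term p i i x) \<partial>PiM {..<n} (\<lambda>_. lborel))
      = (\<integral>\<^sup>+ t. ennreal (gauss ((theta_star \<circ> p) i) t) * ennreal (U t) \<partial>lborel)"
    by (simp only:) (rule nn_integral_PiM_prod_gauss_single[OF i], simp add: U_def[abs_def])
  also have "\<dots> \<le> ennreal (2 * (64 * exp (-(margin^2))) * exp ((2 + margin)^2/2))"
    unfolding U_def comp_def by (rule nn_integral_gauss_exp_abs_le) simp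
  also have "\<dots> \<le> ennreal tail_bound"
  proof (rule ennreal_leI)
    have "2 * (64 * exp (-(margin^2))) * exp ((2 + margin)^2/2) = 128 * exp (-(margin^2)/2 + 2 * margin + 2)"
      by (simp add: power2_eq_square algebra_simps flip: exp_add)
    then show "2 * (64 * exp (-(margin^2))) * exp ((2 + margin)^2/2) \<le> tail_bound"
      by (simp add: tail_bound_def)
  qed
  finally show ?thesis .
qed

lemma nn_integral_tail_term_other_le:
  assumes p: "p permutes {..<n}" and i: "i < n" and l: "l < n" "l \<noteq> i"
  shows "(\<integral>\<^sup>+ x. prod_gauss n (theta_star \<circ> p) x * ennreal (tail_term p i l x) \<partial>PiM {..<n} (\<lambda>_. lborel))
    \<le> ennreal tail_bound"
proof -
  define U where "U t = 64 * exp (-(margin^2)) * exp (2 * \<bar>t - theta_star (p i)\<bar>)" for t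
  define V where "V t = 1 * exp (margin * \<bar>t - theta_star (p l)\<bar>)" for t
  have "tail_term p i l x = U (x i) * V (x l)" for x
    unfolding tail_term_def U_def V_def by (simp add: algebra_simps flip: exp_add)
  then have "(\<integral>\<^sup>+ x. prod_gauss n (theta_star \<circ> p) x * ennreal (tail_term p i l x) \<partial>PiM {..<n} (\<lambda>_. lborel))
      = (\<integral>\<^sup>+ x. prod_gauss n (theta_star \<circ> p) x * (ennreal (U (x i)) * ennreal (V (x l))) \<partial>PiM {..<n} (\<lambda>_. lborel))"
    by (simp add: ennreal_mult U_def V_def)
  also have "\<dots> = (\<integral>\<^sup>+ t. ennreal (gauss ((theta_star \<circ> p) i) t) * ennreal (U t) \<partial>lborel)
      * (\<integral>\<^sup>+ t. ennreal (gauss ((theta_star \<circ> p) l) t) * ennreal (V t) \<partial>lborel)"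
    by (rule nn_integral_PiM_prod_gauss_pair[OF i l(1)]) (use l(2) in \<open>simp_all add: U_def[abs_def] V_def[abs_def]\<close>)
  also have "\<dots> \<le> ennreal (2 * (64 * exp (-(margin^2))) * exp (2^2/2)) * ennreal (2 * 1 * exp (margin^2/2))"
    unfolding U_def V_def comp_def by (intro mult_mono nn_integral_gauss_exp_abs_le) simp_all
  also have "\<dots> = ennreal (2 * (64 * exp (-(margin^2))) * exp (2^2/2) * (2 * 1 * exp (margin^2/2)))"
    by (rule ennreal_mult[symmetric]) simp_all
  also have "\<dots> \<le> ennreal tail_bound"
  proof (rule ennreal_leI)
    have "2 * (64 * exp (-(margin^2))) * exp (2^2/2) * (2 * 1 * exp (margin^2/2)) = 256 * exp (-(margin^2)/2 + 2)"
      by (simp add: power2_eq_square algebra_simps flip: exp_add)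
    also have "\<dots> \<le> tail_bound" using margin_ge_4 by (simp add: tail_bound_def)
    finally show "2 * (64 * exp (-(margin^2))) * exp (2^2/2) * (2 * 1 * exp (margin^2/2)) \<le> tail_bound" .
  qed
  finally show ?thesis .
qed

lemma nn_integral_tail_term_le:
  assumes p: "p permutes {..<n}" and i: "i < n" and l: "l < n"
  shows "(\<integral>\<^sup>+ x. prod_gauss n (theta_star \<circ> p) x * ennreal (tail_term p i l x) \<partial>PiM {..<n} (\<lambda>_. lborel))
    \<le> ennreal tail_bound"
  using nn_integral_tail_term_same_le[OF p i] nn_integral_tail_term_other_le[OF p i l] by (cases "l = i") simp_all

lemma nn_integral_pi_estimate_error_le:
  assumes p: "p permutes {..<n}" and i: "i < n"
  shows "(\<integral>\<^sup>+ x. prod_gauss n (theta_star \<circ> p) x * ennreal ((theta_star (p i) - pi_estimate i x)^2) \<partial>PiM {..<n} (\<lambda>_. lborel))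
    \<le> ennreal ((if p i < 2 * m then 64 * exp (-16) else 0) + real n * tail_bound)"
proof -
  let ?P = "PiM {..<n} (\<lambda>_. lborel::real measure)"
  let ?D = "prod_gauss n (theta_star \<circ> p)"
  have [measurable]: "(\<lambda>x. x l) \<in> borel_measurable ?P" if "l < n" for l
    using that by simp
  have [measurable]: "(\<lambda>x. x i) \<in> borel_measurable ?P" "(\<lambda>x. x (partner_coord p i)) \<in> borel_measurable ?P"
    using i partner_coord(1)[OF p i] by simp_all
  have [measurable]: "(\<lambda>x. ennreal (swap_term p i x)) \<in> borel_measurable ?P"
    unfolding swap_term_def by measurable
  have [measurable]: "l < n \<Longrightarrow> (\<lambda>x. ennreal (tail_term p i l x)) \<in> borel_measurable ?P" for l
    unfolding tail_term_def by measurable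
  have "(\<integral>\<^sup>+ x. ?D x * ennreal ((theta_star (p i) - pi_estimate i x)^2) \<partial>?P)
      \<le> (\<integral>\<^sup>+ x. ?D x * ennreal (swap_term p i x) + (\<Sum>l<n. ?D x * ennreal (tail_term p i l x)) \<partial>?P)"
  proof (intro nn_integral_mono)
    fix x
    have "ennreal ((theta_star (p i) - pi_estimate i x)^2) \<le> ennreal (swap_term p i x + (\<Sum>l<n. tail_term p i l x))"
      using pi_estimate_error_sq_le_tails[OF p i] by (rule ennreal_leI)
    also have "\<dots> = ennreal (swap_term p i x) + (\<Sum>l<n. ennreal (tail_term p i l x))"
      by (simp add: swap_term_def tail_term_def sum_nonneg sum_ennreal flip: ennreal_plus)
    finally show "?D x * ennreal ((theta_star (p i) - pi_estimate i x)^2)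
        \<le> ?D x * ennreal (swap_term p i x) + (\<Sum>l<n. ?D x * ennreal (tail_term p i l x))"
      by (simp add: mult_left_mono flip: distrib_left sum_distrib_left)
  qed
  also have "\<dots> = (\<integral>\<^sup>+ x. ?D x * ennreal (swap_term p i x) \<partial>?P) + (\<Sum>l<n. \<integral>\<^sup>+ x. ?D x * ennreal (tail_term p i l x) \<partial>?P)"
  proof -
    have "(\<integral>\<^sup>+ x. (\<Sum>l<n. ?D x * ennreal (tail_term p i l x)) \<partial>?P) = (\<Sum>l<n. \<integral>\<^sup>+ x. ?D x * ennreal (tail_term p i l x) \<partial>?P)"
      by (rule nn_integral_sum) measurable
    then show ?thesis by (subst nn_integral_add) measurable
  qed
  also have "\<dots> \<le> ennreal (if p i < 2 * m then 64 * exp (-16) else 0) + (\<Sum>l<n. ennreal tail_bound)"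
    using nn_integral_swap_term[OF p i]
    by (intro add_mono sum_mono nn_integral_tail_term_le[OF p i]) simp_all
  also have "\<dots> = ennreal ((if p i < 2 * m then 64 * exp (-16) else 0) + real n * tail_bound)"
    by (simp add: tail_bound_def ennreal_of_nat_eq_real_of_nat flip: ennreal_plus ennreal_mult)
  finally show ?thesis .
qed

definition separable_risk :: "(real \<Rightarrow> real) \<Rightarrow> nat \<Rightarrow> ennreal" where
  "separable_risk f a = (\<integral>\<^sup>+ t. ennreal (gauss (theta_star a) t) * ennreal ((theta_star a - f t)^2) \<partial>lborel)"

lemma sq_dist_le_sum_sq_dist:
  fixes u v y :: real
  shows "(u - v)^2 \<le> 2 * ((u - y)^2 + (v - y)^2)"
proof -
  have "2 * ((u - y)^2 + (v - y)^2) = (u - v)^2 + (u + v - 2 * y)^2"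
    by (simp add: power2_eq_square algebra_simps)
  then show ?thesis by simp
qed

text \<open>No \<open>y\<close> is within 4 of both members of a pair, and near the center both densities are at least
  \<open>\<phi>(9/2)\<close>.\<close>

lemma pair_loss_ge:
  assumes a: "a < 2 * m" and t: "t \<in> {center (cluster a) - 1/2 .. center (cluster a)}"
  shows "32 * gauss 0 (9/2)
    \<le> gauss (theta_star a) t * (theta_star a - y)^2 + gauss (theta_star (partner a)) t * (theta_star (partner a) - y)^2"
proof -
  define c where "c = center (cluster a)"
  define \<phi> where "\<phi> = gauss 0 (9/2)"
  have ta: "theta_star a = c + offset a" by (simp add: theta_star_def c_def)
  have tb: "theta_star (partner a) = c - offset a"
    using offset_partner[of a] cluster_partner[of a] by (simp add: theta_star_def c_def)
  have oa: "offset a = 4 \<or> offset a = -4" using a by (simp add: offset_def pair_sign_def)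
  have dens: "\<phi> \<le> gauss (theta_star a) t" "\<phi> \<le> gauss (theta_star (partner a)) t"
    unfolding \<phi>_def using t ta tb oa by (auto simp: c_def intro!: gauss_ge_of_dist_le)
  have "(theta_star a - theta_star (partner a))^2 = 64" using ta tb oa by auto
  then have sq: "32 \<le> (theta_star a - y)^2 + (theta_star (partner a) - y)^2"
    using sq_dist_le_sum_sq_dist[of "theta_star a" "theta_star (partner a)" y] by simp
  have "32 * \<phi> \<le> \<phi> * ((theta_star a - y)^2 + (theta_star (partner a) - y)^2)"
    using mult_right_mono[OF sq, of \<phi>] by (simp add: \<phi>_def normal_density_nonneg mult.commute)
  also have "\<dots> \<le> gauss (theta_star a) t * (theta_star a - y)^2 + gauss (theta_star (partner a)) t * (theta_star (partner a) - y)^2"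
    using dens by (simp add: distrib_left add_mono mult_right_mono)
  finally show ?thesis by (simp add: \<phi>_def)
qed

lemma separable_risk_pair_ge:
  assumes f[measurable]: "f \<in> borel_measurable borel" and a: "a < 2 * m"
  shows "ennreal (16 * gauss 0 (9/2)) \<le> separable_risk f a + separable_risk f (partner a)"
proof -
  define I where "I = {center (cluster a) - 1/2 .. center (cluster a)}"
  define \<phi> where "\<phi> = gauss 0 (9/2)"
  have "ennreal (16 * \<phi>) = ennreal (32 * \<phi> * (1/2))"
    by simp
  also have "\<dots> = ennreal (32 * \<phi>) * ennreal (1/2)"
    by (rule ennreal_mult) (simp_all add: \<phi>_def normal_density_nonneg)
  also have "\<dots> = (\<integral>\<^sup>+ t. ennreal (32 * \<phi>) * indicator I t \<partial>lborel)"
    by (simp add: nn_integral_cmult_indicator I_def)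
  also have "\<dots> \<le> (\<integral>\<^sup>+ t. ennreal (gauss (theta_star a) t) * ennreal ((theta_star a - f t)^2)
      + ennreal (gauss (theta_star (partner a)) t) * ennreal ((theta_star (partner a) - f t)^2) \<partial>lborel)"
    using pair_loss_ge[OF a, folded I_def \<phi>_def]
    by (intro nn_integral_mono)
      (auto simp: indicator_def ennreal_leI normal_density_nonneg simp flip: ennreal_mult ennreal_plus)
  also have "\<dots> = separable_risk f a + separable_risk f (partner a)"
    unfolding separable_risk_def by (rule nn_integral_add) auto
  finally show ?thesis by (simp add: \<phi>_def)
qed

lemma sum_paired_coords:
  assumes p: "p permutes {..<n}"
  shows "(\<Sum>i<n. if p i < 2 * m then B else 0) = real (2 * m) * (B::real)"
proof -
  have "(\<Sum>i<n. if p i < 2 * m then B else 0) = (\<Sum>a\<in>p ` {..<n}. if a < 2 * m then B else 0)"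
    by (subst sum.reindex) (auto intro: inj_on_subset[OF permutes_inj[OF p]])
  also have "p ` {..<n} = {..<n}" by (rule permutes_image[OF p])
  also have "(\<Sum>a<n. if a < 2 * m then B else 0) = (\<Sum>a\<in>{a\<in>{..<n}. a < 2 * m}. B)"
    by (rule sum.inter_filter[symmetric]) simp
  also have "{a\<in>{..<n}. a < 2 * m} = {..<2 * m}" using pairs_le by auto
  finally show ?thesis by simp
qed

lemma sum_perms_paired_coords:
  "(\<Sum>i<n. \<Sum>p\<in>perms n. if p i < 2 * m then B else 0) = fact n * (real (2 * m) * (B::real))"
  by (subst sum.swap) (simp add: sum_paired_coords perms_def card_perms[unfolded perms_def])

text \<open>Composing with \<open>partner\<close> is a bijection of \<open>perms n\<close>, so in the average over all permutations
  every coordinate meets each paired value as often as its partner.\<close>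

lemma separable_risk_sum_ge:
  assumes f: "\<And>i. i < n \<Longrightarrow> f i \<in> borel_measurable borel"
  shows "ennreal (16 * gauss 0 (9/2) * real m)
    \<le> (\<Sum>i<n. \<Sum>p\<in>perms n. ennreal (1 / fact n) * separable_risk (f i) (p i))"
proof -
  define B where "B = 16 * gauss 0 (9/2)"
  have B0: "B \<ge> 0" by (simp add: B_def normal_density_nonneg)
  define T where "T = (\<Sum>i<n. \<Sum>p\<in>perms n. separable_risk (f i) (p i))"
  have swap: "(\<Sum>p\<in>perms n. separable_risk (f i) (p i)) = (\<Sum>p\<in>perms n. separable_risk (f i) (partner (p i)))" for i
    by (rule sum.reindex_bij_witness[where i="\<lambda>p. partner \<circ> p" and j="\<lambda>p. partner \<circ> p"])
      (auto simp: partner_partner perms_def intro: permutes_compose[OF _ partner_permutes])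
  have "2 * ennreal (fact n * (real m * B)) = ennreal (2 * (fact n * (real m * B)))"
    by (simp add: ennreal_mult')
  also have "\<dots> = ennreal (\<Sum>i<n. \<Sum>p\<in>perms n. if p i < 2 * m then B else 0)"
    by (subst sum_perms_paired_coords) (simp add: algebra_simps)
  also have "\<dots> = (\<Sum>i<n. \<Sum>p\<in>perms n. ennreal (if p i < 2 * m then B else 0))"
    using B0 by (simp add: sum_ennreal sum_nonneg)
  also have "\<dots> \<le> (\<Sum>i<n. \<Sum>p\<in>perms n. separable_risk (f i) (p i) + separable_risk (f i) (partner (p i)))"
    using separable_risk_pair_ge f by (intro sum_mono) (simp add: B_def)
  also have "\<dots> = (\<Sum>i<n. (\<Sum>p\<in>perms n. separable_risk (f i) (p i)) + (\<Sum>p\<in>perms n. separable_risk (f i) (p i)))"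
    by (simp only: sum.distrib swap[symmetric])
  also have "\<dots> = 2 * T"
    by (simp add: T_def mult_2 sum.distrib)
  finally have "ennreal (fact n * (real m * B)) \<le> T"
    by (subst (asm) ennreal_mult_le_mult_iff) simp_all
  then have "ennreal (1 / fact n) * ennreal (fact n * (real m * B)) \<le> ennreal (1 / fact n) * T"
    by (rule mult_left_mono) simp
  then show ?thesis
    using B0 by (simp add: T_def B_def sum_distrib_left mult.commute mult.left_commute flip: ennreal_mult)
qed

lemma borel_measurable_pi_estimate:
  assumes i: "i < n"
  shows "pi_estimate i \<in> borel_measurable (PiM {..<n} (\<lambda>_. borel::real measure))"
proof -
  let ?P = "PiM {..<n} (\<lambda>_. borel::real measure)"
  have [measurable]: "(\<lambda>x. x j) \<in> borel_measurable ?P" if "j < n" for j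
    using that by simp
  have [measurable]: "(\<lambda>x. \<Sum>j\<in>{..<n} - {i}. if in_window k (x j) then x i - x j else 0) \<in> borel_measurable ?P" for k
    using i by (intro borel_measurable_sum) (auto simp: in_window_def)
  have [measurable]: "(\<lambda>x. window_estimate i k x) \<in> borel_measurable ?P" for k
    unfolding window_estimate_def by measurable
  show ?thesis
    using i unfolding pi_estimate_def[abs_def] in_window_def clip_def by measurable
qed

lemma borel_measurable_pi_estimate_lborel:
  "i < n \<Longrightarrow> pi_estimate i \<in> borel_measurable (PiM {..<n} (\<lambda>_. lborel::real measure))"
  using borel_measurable_pi_estimate measurable_cong_sets[OF sets_PiM_cong[OF refl, of _ "\<lambda>_. lborel" "\<lambda>_. borel"] refl]
  by simp

lemma separable_error_eq:
  assumes i: "i < n"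
  shows "ennreal (\<integral>\<omega>. (theta_rv theta_star i \<omega> - theta_S n theta_star i \<omega>)^2 \<partial>perm_gauss_model n theta_star)
    = (\<Sum>p\<in>perms n. ennreal (1 / fact n) * separable_risk (\<lambda>t. theta_S n theta_star i (obs_section n i t)) (p i))"
proof -
  let ?M = "perm_gauss_model n theta_star"
  interpret prob_space ?M by (rule prob_space_perm_gauss_model)
  define f where "f t = theta_S n theta_star i (obs_section n i t)" for t
  have S: "theta_S n theta_star i \<in> borel_measurable (sigma_Xi n theta_star i)"
    unfolding theta_S_def by simp
  note factor = sigma_Xi_measurable_factor[OF S i, folded f_def]
  have [measurable]: "f \<in> borel_measurable borel" using factor(1) by (simp add: f_def[abs_def])
  have [measurable]: "(\<lambda>x. x i) \<in> borel_measurable (PiM {..<n} (\<lambda>_. lborel::real measure))"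
    using i by simp
  have "AE \<omega> in ?M. \<bar>theta_S n theta_star i \<omega>\<bar> \<le> \<mu>"
    unfolding theta_S_def
    by (rule AE_abs_real_cond_exp_le[OF sigma_finite_subalgebra_sigma_Xi[OF i] finite_measure borel_measurable_theta_rv])
      (use abs_theta_rv_le theta_star_range i in blast)
  then have "integrable ?M (\<lambda>\<omega>. (theta_rv theta_star i \<omega> - theta_S n theta_star i \<omega>)^2)"
    using abs_theta_rv_le theta_star_range i
    by (intro integrable_sq_diff[where B=\<mu> and C=\<mu>]) (auto simp: theta_S_def)
  then have "ennreal (\<integral>\<omega>. (theta_rv theta_star i \<omega> - theta_S n theta_star i \<omega>)^2 \<partial>?M)
      = (\<integral>\<^sup>+ \<omega>. ennreal ((theta_rv theta_star i \<omega> - theta_S n theta_star i \<omega>)^2) \<partial>?M)"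
    by (simp add: nn_integral_eq_integral)
  also have "\<dots> = (\<integral>\<^sup>+ \<omega>. (\<lambda>p x. ennreal ((theta_star (p i) - f (x i))^2)) (fst \<omega>) (snd \<omega>) \<partial>?M)"
    by (intro nn_integral_cong) (simp add: theta_rv_def factor(2))
  also have "\<dots> = (\<Sum>p\<in>perms n. ennreal (1 / fact n) *
      \<integral>\<^sup>+ x. prod_gauss n (theta_star \<circ> p) x * ennreal ((theta_star (p i) - f (x i))^2) \<partial>PiM {..<n} (\<lambda>_. lborel))"
    by (rule nn_integral_perm_gauss_model) measurable
  also have "\<dots> = (\<Sum>p\<in>perms n. ennreal (1 / fact n) * separable_risk f (p i))"
    unfolding separable_risk_def
    by (subst nn_integral_PiM_prod_gauss_single[OF i, where u="\<lambda>t. ennreal ((theta_star (p i) - f t)^2)" for p])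
      simp_all
  finally show ?thesis unfolding f_def[abs_def] .
qed

lemma pi_error_le:
  assumes i: "i < n"
  shows "(\<integral>\<omega>. (theta_rv theta_star i \<omega> - pi_estimate i (snd \<omega>))^2 \<partial>perm_gauss_model n theta_star)
    \<le> (\<Sum>p\<in>perms n. ((if p i < 2 * m then 64 * exp (-16) else 0) + real n * tail_bound) / fact n)"
proof -
  let ?M = "perm_gauss_model n theta_star"
  interpret prob_space ?M by (rule prob_space_perm_gauss_model)
  define h where "h p = (if p i < 2 * m then 64 * exp (-16) else 0) + real n * tail_bound" for p :: "nat \<Rightarrow> nat"
  have h0: "0 \<le> h p" for p by (simp add: h_def tail_bound_def)
  have [measurable]: "pi_estimate i \<in> borel_measurable (PiM {..<n} (\<lambda>_. lborel))"
    by (rule borel_measurable_pi_estimate_lborel[OF i])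
  have "(\<lambda>\<omega>. pi_estimate i (snd \<omega>)) \<in> borel_measurable ?M"
    by (rule measurable_perm_gauss_model) simp
  then have "integrable ?M (\<lambda>\<omega>. (theta_rv theta_star i \<omega> - pi_estimate i (snd \<omega>))^2)"
    using abs_theta_rv_le theta_star_range i abs_pi_estimate_le
    by (intro integrable_sq_diff[where B=\<mu> and C=\<mu>]) auto
  then have "ennreal (\<integral>\<omega>. (theta_rv theta_star i \<omega> - pi_estimate i (snd \<omega>))^2 \<partial>?M)
      = (\<integral>\<^sup>+ \<omega>. (\<lambda>p x. ennreal ((theta_star (p i) - pi_estimate i x)^2)) (fst \<omega>) (snd \<omega>) \<partial>?M)"
    by (simp add: nn_integral_eq_integral theta_rv_def)
  also have "\<dots> = (\<Sum>p\<in>perms n. ennreal (1 / fact n) *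
      \<integral>\<^sup>+ x. prod_gauss n (theta_star \<circ> p) x * ennreal ((theta_star (p i) - pi_estimate i x)^2) \<partial>PiM {..<n} (\<lambda>_. lborel))"
    by (rule nn_integral_perm_gauss_model) measurable
  also have "\<dots> \<le> (\<Sum>p\<in>perms n. ennreal (1 / fact n) * ennreal (h p))"
    using nn_integral_pi_estimate_error_le i
    by (intro sum_mono mult_left_mono) (auto simp: perms_def h_def)
  also have "\<dots> = ennreal (\<Sum>p\<in>perms n. h p / fact n)"
    using h0 by (simp add: sum_ennreal divide_inverse mult.commute flip: ennreal_mult)
  finally show ?thesis
    using h0 by (simp add: ennreal_le_iff sum_nonneg h_def)
qed

lemma separable_error_sum_ge:
  "16 * gauss 0 (9/2) * real m
    \<le> (\<Sum>i<n. \<integral>\<omega>. (theta_rv theta_star i \<omega> - theta_S n theta_star i \<omega>)^2 \<partial>perm_gauss_model n theta_star)"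
proof -
  have "ennreal (16 * gauss 0 (9/2) * real m)
      \<le> (\<Sum>i<n. \<Sum>p\<in>perms n. ennreal (1 / fact n) * separable_risk (\<lambda>t. theta_S n theta_star i (obs_section n i t)) (p i))"
  proof (rule separable_risk_sum_ge)
    fix i assume i: "i < n"
    have "theta_S n theta_star i \<in> borel_measurable (sigma_Xi n theta_star i)"
      unfolding theta_S_def by simp
    then show "(\<lambda>t. theta_S n theta_star i (obs_section n i t)) \<in> borel_measurable borel"
      by (rule sigma_Xi_measurable_factor(1)[OF _ i])
  qed
  also have "\<dots> = (\<Sum>i<n. ennreal (\<integral>\<omega>. (theta_rv theta_star i \<omega> - theta_S n theta_star i \<omega>)^2 \<partial>perm_gauss_model n theta_star))"
    by (simp add: separable_error_eq)
  also have "\<dots> = ennreal (\<Sum>i<n. \<integral>\<omega>. (theta_rv theta_star i \<omega> - theta_S n theta_star i \<omega>)^2 \<partial>perm_gauss_model n theta_star)"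
    by (rule sum_ennreal) simp
  finally show ?thesis by (rule ennreal_le_iff[THEN iffD1, rotated]) (simp add: sum_nonneg)
qed

lemma pi_error_sum_le:
  "(\<Sum>i<n. \<integral>\<omega>. (theta_rv theta_star i \<omega> - pi_estimate i (snd \<omega>))^2 \<partial>perm_gauss_model n theta_star)
    \<le> 128 * exp (-16) * real m + real n * real n * tail_bound"
proof -
  have "(\<Sum>i<n. \<integral>\<omega>. (theta_rv theta_star i \<omega> - pi_estimate i (snd \<omega>))^2 \<partial>perm_gauss_model n theta_star)
      \<le> (\<Sum>i<n. \<Sum>p\<in>perms n. ((if p i < 2 * m then 64 * exp (-16) else 0) + real n * tail_bound) / fact n)"
    by (intro sum_mono pi_error_le) simp
  also have "\<dots> = (\<Sum>i<n. \<Sum>p\<in>perms n. if p i < 2 * m then 64 * exp (-16) else 0) / fact n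
      + (\<Sum>i<n. \<Sum>p\<in>perms n. real n * tail_bound) / fact n"
    by (simp only: add_divide_distrib sum.distrib sum_divide_distrib)
  also have "\<dots> = 128 * exp (-16) * real m + real n * real n * tail_bound"
    by (simp only: sum_perms_paired_coords) (simp add: card_perms)
  finally show ?thesis .
qed

lemma S_PI_gap_ge:
  "16 * gauss 0 (9/2) * real m - (128 * exp (-16) * real m + real n * real n * tail_bound) \<le> S_PI_gap n theta_star"
proof -
  let ?M = "perm_gauss_model n theta_star"
  interpret prob_space ?M by (rule prob_space_perm_gauss_model)
  let ?\<theta> = "theta_rv theta_star" and ?S = "theta_S n theta_star" and ?P = "theta_PI n theta_star"
  let ?G = "\<lambda>i \<omega>. pi_estimate i (snd \<omega>)"
  have \<theta>: "\<omega> \<in> space ?M \<Longrightarrow> \<bar>?\<theta> i \<omega>\<bar> \<le> \<mu>" if "i < n" for i \<omega>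
    using abs_theta_rv_le theta_star_range that by blast
  have S: "AE \<omega> in ?M. \<bar>?S i \<omega>\<bar> \<le> \<mu>" if "i < n" for i
    unfolding theta_S_def using that
    by (intro AE_abs_real_cond_exp_le[OF sigma_finite_subalgebra_sigma_Xi finite_measure borel_measurable_theta_rv \<theta>])
  have P: "AE \<omega> in ?M. \<bar>?P i \<omega>\<bar> \<le> \<mu>" if "i < n" for i
    unfolding theta_PI_def using that
    by (intro AE_abs_real_cond_exp_le[OF sigma_finite_subalgebra_sigma_X finite_measure borel_measurable_theta_rv \<theta>])
  have G: "?G i \<in> borel_measurable (sigma_X n theta_star)" if "i < n" for i
    using measurable_compose[OF measurable_snd_sigma_X borel_measurable_pi_estimate[OF that]] by (simp add: comp_def)
  have excess: "(\<integral>\<omega>. (?\<theta> i \<omega> - ?S i \<omega>)^2 \<partial>?M) - (\<integral>\<omega>. (?\<theta> i \<omega> - ?G i \<omega>)^2 \<partial>?M)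
      \<le> (\<integral>\<omega>. (?S i \<omega> - ?P i \<omega>)^2 \<partial>?M)" if i: "i < n" for i
    unfolding theta_PI_def
    by (rule real_cond_exp_excess_risk_le[OF sigma_finite_subalgebra_sigma_X finite_measure borel_measurable_theta_rv
          \<theta>[OF i] theta_S_measurable_sigma_X[OF i] S[OF i] G[OF i] AE_I2[OF abs_pi_estimate_le]])
  have "integrable ?M (\<lambda>\<omega>. (?S i \<omega> - ?P i \<omega>)^2)" if "i < n" for i
    using S[OF that] P[OF that] by (intro integrable_sq_diff) (simp_all add: theta_S_def theta_PI_def)
  then have "S_PI_gap n theta_star = (\<Sum>i<n. \<integral>\<omega>. (?S i \<omega> - ?P i \<omega>)^2 \<partial>?M)"
    unfolding S_PI_gap_def by (intro Bochner_Integration.integral_sum) simp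
  moreover have "(\<Sum>i<n. \<integral>\<omega>. (?\<theta> i \<omega> - ?S i \<omega>)^2 \<partial>?M) - (\<Sum>i<n. \<integral>\<omega>. (?\<theta> i \<omega> - ?G i \<omega>)^2 \<partial>?M)
      \<le> (\<Sum>i<n. \<integral>\<omega>. (?S i \<omega> - ?P i \<omega>)^2 \<partial>?M)"
    unfolding sum_subtractf[symmetric] by (intro sum_mono excess) simp
  ultimately show ?thesis
    using separable_error_sum_ge pi_error_sum_le by linarith
qed

end

section \<open>Choice of the parameters\<close>

lemma sqrt_2pi_le_3: "sqrt (2 * pi) \<le> 3"
  using pi_less_4 real_sqrt_le_mono[of "2 * pi" "3^2"] by simp

lemma swap_constant_le: "128 * exp (-16) \<le> 8 * gauss 0 (9/2)"
proof -
  have "48 \<le> (1 + (47/8) / real (10::nat)) ^ 10" by (simp add: power_divide)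
  also have "\<dots> \<le> exp (47/8)" by (rule exp_ge_one_plus_x_over_n_power_n) simp_all
  finally have "16 * sqrt (2 * pi) \<le> exp (47/8)" using sqrt_2pi_le_3 by linarith
  then have "16 * sqrt (2 * pi) * exp (-16) \<le> exp (47/8) * exp (-16)" by simp
  also have "\<dots> = exp (-(81/8))" by (simp flip: exp_add)
  finally show ?thesis by (simp add: normal_density_def power2_eq_square field_simps)
qed

lemma tail_constant_le:
  fixes S :: real and n :: nat
  assumes S: "8 \<le> S" and n: "0 < n" and L: "ln (real n) = S^2"
  shows "real n * real n * (256 * exp (-((3 * S)^2)/2 + 2 * (3 * S) + 2)) \<le> 4 * gauss 0 (9/2)"
proof -
  have "real n = exp (S^2)" using n L by (metis exp_ln of_nat_0_less_iff)
  then have "real n * real n * (256 * exp (-((3 * S)^2)/2 + 2 * (3 * S) + 2)) = 256 * exp (-(5/2 * S^2 - 6 * S - 2))"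
    by (simp add: power2_eq_square algebra_simps flip: exp_add)
  also have "\<dots> \<le> 256 * exp (-110)"
  proof -
    have "8 * S \<le> S * S" using S by (intro mult_right_mono) auto
    then have "110 \<le> 5/2 * S^2 - 6 * S - 2" using S unfolding power2_eq_square by linarith
    then show ?thesis by simp
  qed
  also have "\<dots> \<le> 4 * (exp (-(81/8)) / sqrt (2 * pi))"
  proof -
    have "192 \<le> (1 + 98 / real (2::nat)) ^ 2" by (simp add: power_divide)
    also have "\<dots> \<le> exp 98" by (rule exp_ge_one_plus_x_over_n_power_n) simp_all
    finally have "64 * sqrt (2 * pi) \<le> exp (110 - 81/8 - 15/8)" using sqrt_2pi_le_3 by simp
    then have "64 * sqrt (2 * pi) * exp (-110) \<le> exp (110 - 81/8 - 15/8) * exp (-110)" by simp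
    also have "\<dots> \<le> exp (-(81/8))" by (simp flip: exp_add)
    finally show ?thesis by (simp add: field_simps)
  qed
  also have "\<dots> = 4 * gauss 0 (9/2)" by (simp add: normal_density_def power2_eq_square)
  finally show ?thesis .
qed

lemma half_le_nat_floor:
  assumes "1 \<le> x"
  shows "x / 2 \<le> real (nat \<lfloor>x\<rfloor>)"
proof -
  have "1 \<le> \<lfloor>x\<rfloor>" using assms by simp
  then have "real (nat \<lfloor>x\<rfloor>) = real_of_int \<lfloor>x\<rfloor>" "1 \<le> real_of_int \<lfloor>x\<rfloor>" by simp_all
  moreover have "x - 1 < real_of_int \<lfloor>x\<rfloor>" by linarith
  ultimately show ?thesis by linarith
qed

lemma ln_ge_64: "2^96 \<le> n \<Longrightarrow> 64 \<le> ln (real n)"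
proof -
  assume "2^96 \<le> n"
  then have "ln (2^96) \<le> ln (real n)" by (intro ln_mono) (simp_all add: numeral_power_le_of_nat_cancel_iff)
  moreover have "ln ((2::real)^96) = 96 * ln 2" using ln_realpow[of "2::real" 96] by simp
  ultimately show ?thesis using ln2_ge_two_thirds by linarith
qed

lemma exists_gap_design:
  fixes n :: nat and \<mu> :: real
  defines "S \<equiv> sqrt (ln (real n))"
  assumes n: "2^96 \<le> n" and \<mu>: "8 * S \<le> \<mu>"
  shows "\<exists>m. gap_design n m \<mu> (6 * S + 8) \<and> 1 \<le> real m \<and> min (\<mu> / S) (real n) / 14 \<le> real m"
proof -
  define s where "s = 6 * S + 8"
  define x where "x = (2 * \<mu> - 8) / s"
  define m where "m = min (nat \<lfloor>x\<rfloor>) (n div 2)"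
  have S: "8 \<le> S" using real_sqrt_le_mono[OF ln_ge_64[OF n]] by (simp add: S_def)
  have n2: "2 \<le> n" using le_trans[OF _ n, of 2] by simp
  have s: "16 \<le> s" "s \<le> 7 * S" using S by (simp_all add: s_def)
  have "\<mu> / (7 * S) \<le> \<mu> / s" using s S \<mu> by (intro divide_left_mono) auto
  also have "\<dots> \<le> x" unfolding x_def using s S \<mu> by (intro divide_right_mono) auto
  finally have x: "\<mu> / (7 * S) \<le> x" .
  have x1: "1 \<le> \<mu> / (7 * S)" using \<mu> S by (simp add: field_simps)
  have "2 * m \<le> n" by (simp add: m_def)
  moreover have "real m * s + 8 \<le> 2 * \<mu>"
  proof -
    have "real m \<le> real (nat \<lfloor>x\<rfloor>)" by (simp add: m_def)
    also have "\<dots> \<le> x" using x x1 by linarith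
    finally have "real m \<le> x" .
    then have "real m * s \<le> x * s" using s by (intro mult_right_mono) auto
    then show ?thesis using s by (simp add: x_def)
  qed
  moreover have "1 \<le> real m"
  proof -
    have "1 \<le> nat \<lfloor>x\<rfloor>" using x x1 by linarith
    moreover have "1 \<le> n div 2" using n2 by linarith
    ultimately show ?thesis by (simp add: m_def)
  qed
  moreover have "min (\<mu> / S) (real n) / 14 \<le> real m"
  proof -
    have "min (\<mu> / S) (real n) / 14 \<le> (\<mu> / (7 * S)) / 2" by (simp add: min_def divide_right_mono)
    also have "\<dots> \<le> x / 2" using x by simp
    also have "\<dots> \<le> real (nat \<lfloor>x\<rfloor>)" using x x1 by (intro half_le_nat_floor) linarith
    finally have "min (\<mu> / S) (real n) / 14 \<le> real (nat \<lfloor>x\<rfloor>)" .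
    moreover have "min (\<mu> / S) (real n) / 14 \<le> real (n div 2)"
    proof -
      have "min (\<mu> / S) (real n) / 14 \<le> real n / 14" by (simp add: divide_right_mono)
      also have "real n / 14 \<le> real (n div 2)" using n2 by linarith
      finally show ?thesis .
    qed
    ultimately show ?thesis by (simp add: m_def)
  qed
  ultimately show ?thesis using s unfolding s_def by (intro exI[of _ m]) (simp add: gap_design_def)
qed

lemma (in gap_design) S_PI_gap_ge_linear:
  assumes m: "1 \<le> real m" and tail: "real n * real n * tail_bound \<le> 4 * gauss 0 (9/2)"
  shows "4 * gauss 0 (9/2) * real m \<le> S_PI_gap n theta_star"
proof -
  have "128 * exp (-16) * real m \<le> 8 * gauss 0 (9/2) * real m"
    using swap_constant_le by (intro mult_right_mono) simp_all
  moreover have "4 * gauss 0 (9/2) \<le> 4 * gauss 0 (9/2) * real m"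
    using mult_left_mono[OF m, of "4 * gauss 0 (9/2)"] by (simp add: normal_density_nonneg)
  ultimately show ?thesis using S_PI_gap_ge tail by linarith
qed

lemma exists_theta_star_gap_ge:
  fixes n :: nat and \<mu> :: real
  defines "S \<equiv> sqrt (ln (real n))"
  assumes n: "2^96 \<le> n" and \<mu>: "8 * S \<le> \<mu>"
  shows "\<exists>ts. (\<forall>i<n. ts i \<in> {-\<mu>..\<mu>}) \<and> gauss 0 (9/2) / 4 * min (\<mu> / S) (real n) \<le> S_PI_gap n ts"
proof -
  define \<phi> where "\<phi> = gauss 0 (9/2)"
  obtain m where "gap_design n m \<mu> (6 * S + 8)" and m: "1 \<le> real m" "min (\<mu> / S) (real n) / 14 \<le> real m"
    using exists_gap_design[OF n] \<mu> unfolding S_def by blast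
  then interpret gap_design n m \<mu> "6 * S + 8" by simp
  have "8 \<le> S" "ln (real n) = S^2"
    using real_sqrt_le_mono[OF ln_ge_64[OF n]] ln_ge_64[OF n] by (simp_all add: S_def)
  moreover have "0 < n" using le_trans[OF _ n, of 1] by simp
  moreover have "margin = 3 * S" unfolding margin_def by (simp add: field_simps)
  ultimately have "real n * real n * tail_bound \<le> 4 * \<phi>"
    using tail_constant_le[of S n] by (simp add: \<phi>_def tail_bound_def)
  then have "4 * \<phi> * real m \<le> S_PI_gap n theta_star"
    using S_PI_gap_ge_linear m(1) by (simp add: \<phi>_def)
  moreover have "\<phi> / 4 * min (\<mu> / S) (real n) \<le> 4 * \<phi> * real m"
    using m(2) normal_density_pos[of 1 0 "9/2"] by (simp add: \<phi>_def)
  ultimately have "\<phi> / 4 * min (\<mu> / S) (real n) \<le> S_PI_gap n theta_star" by linarith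
  then show ?thesis using theta_star_range unfolding \<phi>_def by blast
qed

theorem theorem7:
  shows "\<exists>(n0::nat) (c::real). n0 > 0 \<and> c > 0 \<and>
    (\<forall>n \<ge> n0. \<forall>\<mu>::real. \<mu> \<ge> 8 * sqrt (ln (real n)) \<longrightarrow>
      (\<exists>ts :: nat \<Rightarrow> real. (\<forall>i<n. ts i \<in> {-\<mu>..\<mu>}) \<and>
         S_PI_gap n ts \<ge> c * min (\<mu> / sqrt (ln (real n))) (real n)))"
proof -
  have "0 < gauss 0 (9/2) / 4" by (simp add: normal_density_pos)
  then show ?thesis
    using exists_theta_star_gap_ge by (intro exI[of _ "2^96"] exI[of _ "gauss 0 (9/2) / 4"]) auto
qed

end
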